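(* Let $X$ be an exponential vector space over a field $K$. If $A$ and $B$ are two bases of $X\smallsetminus X_0$, then $A$ and $B$ have the same cardinality.
   Context: An exponential vector space (evs) over a field $K$ is a partially ordered set $(X,\leq)$ with a binary operation $+$ on $X$ and a map $K\times X\to X$, $(\alpha,x)\mapsto \alpha x$, such that: (A1) $(X,+)$ is a commutative semigroup with identity $\theta$; (A2) $x\leq y$ implies $x+z\leq y+z$ and $\alpha x\leq \alpha y$ for all $z\in X$, $\alpha\in K$; (A3) $\alpha(x+y)=\alpha x+\alpha y$, $\alpha(\beta x)=(\alpha\beta)x$, $(\alpha+\beta)x\leq \alpha x+\beta x$, $1x=x$; (A4) $\alpha x=\theta$ iff $\alpha=0$ or $x=\theta$; (A5) $x+(-1)x=\theta$ iff $x\in X_0$, where $X_0:=\{z\in X: y\not\leq z \text{ for all } y\in X\smallsetminus\{z\}\}$ (the set of minimal elements, called the primitive space; it is a vector space over $K$); (A6) for each $x\in X$ there is $p\in X_0$ with $p\leq x$. For $x\in X\smallsetminus X_0$ let $L(x):=\{z\in X: z\geq \alpha x+p \text{ for some } \alpha\in K\smallsetminus\{0\},\ p\in X_0\}$. A subset $B\subseteq X\smallsetminus X_0$ generates $X\smallsetminus X_0$ if $X\smallsetminus X_0=\bigcup_{b\in B}L(b)$. Elements $x,y\in X\smallsetminus X_0$ are orderly dependent if $x\in L(y)$ or $y\in L(x)$, and orderly independent otherwise; $B\subseteq X\smallsetminus X_0$ is orderly independent if any two distinct members of $B$ are orderly independent. A basis of $X\smallsetminus X_0$ is an orderly independent subset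 of $X\smallsetminus X_0$ that generates $X\smallsetminus X_0$. *)

theory Defs
  imports Main "HOL-Library.Equipollence"
begin

definition primitive :: "('x \<Rightarrow> 'x \<Rightarrow> bool) \<Rightarrow> 'x set" where
  "primitive le = {z. \<forall>y. y \<noteq> z \<longrightarrow> \<not> le y z}"

definition evs :: "('x \<Rightarrow> 'x \<Rightarrow> bool) \<Rightarrow> ('x \<Rightarrow> 'x \<Rightarrow> 'x) \<Rightarrow> ('k::field \<Rightarrow> 'x \<Rightarrow> 'x) \<Rightarrow> 'x \<Rightarrow> bool" where
  "evs le add smult theta \<longleftrightarrow>
     \<comment> \<open>partial order\<close>
     (\<forall>x. le x x) \<and> (\<forall>x y. le x y \<and> le y x \<longrightarrow> x = y) \<and>
     (\<forall>x y z. le x y \<and> le y z \<longrightarrow> le x z) \<and>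
     \<comment> \<open>A1\<close>
     (\<forall>x y z. add (add x y) z = add x (add y z)) \<and> (\<forall>x y. add x y = add y x) \<and>
     (\<forall>x. add x theta = x) \<and>
     \<comment> \<open>A2\<close>
     (\<forall>x y z. le x y \<longrightarrow> le (add x z) (add y z)) \<and>
     (\<forall>x y \<alpha>. le x y \<longrightarrow> le (smult \<alpha> x) (smult \<alpha> y)) \<and>
     \<comment> \<open>A3\<close>
     (\<forall>\<alpha> x y. smult \<alpha> (add x y) = add (smult \<alpha> x) (smult \<alpha> y)) \<and>
     (\<forall>\<alpha> \<beta> x. smult \<alpha> (smult \<beta> x) = smult (\<alpha> * \<beta>) x) \<and>
     (\<forall>\<alpha> \<beta> x. le (smult (\<alpha> + \<beta>) x) (add (smult \<alpha> x) (smult \<beta> x))) \<and>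
     (\<forall>x. smult 1 x = x) \<and>
     \<comment> \<open>A4\<close>
     (\<forall>\<alpha> x. smult \<alpha> x = theta \<longleftrightarrow> \<alpha> = 0 \<or> x = theta) \<and>
     \<comment> \<open>A5\<close>
     (\<forall>x. add x (smult (-1) x) = theta \<longleftrightarrow> x \<in> primitive le) \<and>
     \<comment> \<open>A6\<close>
     (\<forall>x. \<exists>p \<in> primitive le. le p x)"

definition Lset :: "('x \<Rightarrow> 'x \<Rightarrow> bool) \<Rightarrow> ('x \<Rightarrow> 'x \<Rightarrow> 'x) \<Rightarrow> ('k::field \<Rightarrow> 'x \<Rightarrow> 'x) \<Rightarrow> 'x \<Rightarrow> 'x set" where
  "Lset le add smult x =
     {z. \<exists>\<alpha> p. \<alpha> \<noteq> 0 \<and> p \<in> primitive le \<and> le (add (smult \<alpha> x) p) z}"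

definition generates :: "('x \<Rightarrow> 'x \<Rightarrow> bool) \<Rightarrow> ('x \<Rightarrow> 'x \<Rightarrow> 'x) \<Rightarrow> ('k::field \<Rightarrow> 'x \<Rightarrow> 'x) \<Rightarrow> 'x set \<Rightarrow> bool" where
  "generates le add smult B \<longleftrightarrow>
     B \<subseteq> - primitive le \<and> - primitive le = (\<Union>b\<in>B. Lset le add smult b)"

definition orderly_dependent :: "('x \<Rightarrow> 'x \<Rightarrow> bool) \<Rightarrow> ('x \<Rightarrow> 'x \<Rightarrow> 'x) \<Rightarrow> ('k::field \<Rightarrow> 'x \<Rightarrow> 'x) \<Rightarrow> 'x \<Rightarrow> 'x \<Rightarrow> bool" where
  "orderly_dependent le add smult x y \<longleftrightarrow>
     x \<in> Lset le add smult y \<or> y \<in> Lset le add smult x"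

definition orderly_independent_set :: "('x \<Rightarrow> 'x \<Rightarrow> bool) \<Rightarrow> ('x \<Rightarrow> 'x \<Rightarrow> 'x) \<Rightarrow> ('k::field \<Rightarrow> 'x \<Rightarrow> 'x) \<Rightarrow> 'x set \<Rightarrow> bool" where
  "orderly_independent_set le add smult B \<longleftrightarrow>
     B \<subseteq> - primitive le \<and>
     (\<forall>x\<in>B. \<forall>y\<in>B. x \<noteq> y \<longrightarrow> \<not> orderly_dependent le add smult x y)"

definition is_basis :: "('x \<Rightarrow> 'x \<Rightarrow> bool) \<Rightarrow> ('x \<Rightarrow> 'x \<Rightarrow> 'x) \<Rightarrow> ('k::field \<Rightarrow> 'x \<Rightarrow> 'x) \<Rightarrow> 'x set \<Rightarrow> bool" where
  "is_basis le add smult B \<longleftrightarrow>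
     orderly_independent_set le add smult B \<and> generates le add smult B"

end

theory Submission
  imports Defs
begin

text \<open>Write \<open>x \<preceq> y\<close> for \<open>x \<in> L(y)\<close>. The relation \<open>\<preceq>\<close> is transitive, because
  primitive elements are closed under addition and scalar multiples. A basis \<open>A\<close> is an
  antichain for \<open>\<preceq>\<close>, and two bases each cover the other. Mapping \<open>a \<in> A\<close> to some
  \<open>b \<in> B\<close> with \<open>a \<preceq> b\<close> is then injective: \<open>b \<preceq> a'\<close> for some \<open>a' \<in> A\<close>, so \<open>a \<preceq> a'\<close>
  forces \<open>a' = a\<close>, i.e. \<open>b \<preceq> a\<close>, and \<open>b\<close> determines \<open>a\<close>. Hence \<open>A \<lesssim> B\<close>, and by
  symmetry and Schroeder-Bernstein \<open>A \<approx> B\<close>.\<close>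

lemma antichain_lepoll_if_mutually_cofinal:
  assumes trans: "\<And>x y z. R x y \<Longrightarrow> R y z \<Longrightarrow> R x z"
    and A_below_B: "\<And>a. a \<in> A \<Longrightarrow> \<exists>b\<in>B. R a b"
    and B_below_A: "\<And>b. b \<in> B \<Longrightarrow> \<exists>a\<in>A. R b a"
    and antichain: "\<And>x y. x \<in> A \<Longrightarrow> y \<in> A \<Longrightarrow> R x y \<Longrightarrow> x = y"
  shows "A \<lesssim> B"
proof -
  obtain f where f: "\<And>a. a \<in> A \<Longrightarrow> f a \<in> B \<and> R a (f a)"
    using A_below_B by metis
  have f_below: "R (f a) a" if a: "a \<in> A" for a
  proof -
    obtain a' where a': "a' \<in> A" "R (f a) a'"
      using B_below_A f a by blast
    then have "a = a'"
      using antichain a f trans by blast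
    with a' show ?thesis by simp
  qed
  have "inj_on f A"
  proof (rule inj_onI)
    fix x y assume "x \<in> A" "y \<in> A" "f x = f y"
    then have "R x y"
      using f f_below trans by metis
    then show "x = y"
      using antichain \<open>x \<in> A\<close> \<open>y \<in> A\<close> by blast
  qed
  with f show ?thesis
    unfolding lepoll_def by blast
qed

lemma is_basis_not_primitive:
  "is_basis le add smult B \<Longrightarrow> b \<in> B \<Longrightarrow> b \<notin> primitive le"
  by (auto simp: is_basis_def orderly_independent_set_def)

lemma is_basis_covers:
  assumes "is_basis le add smult B" and "x \<notin> primitive le"
  shows "\<exists>b\<in>B. x \<in> Lset le add smult b"
proof -
  have "- primitive le = (\<Union>b\<in>B. Lset le add smult b)"
    using assms(1) by (simp add: is_basis_def generates_def)
  with assms(2) show ?thesis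
    by (metis ComplI UN_iff)
qed

lemma is_basis_Lset_imp_eq:
  "is_basis le add smult B \<Longrightarrow> x \<in> B \<Longrightarrow> y \<in> B \<Longrightarrow> x \<in> Lset le add smult y \<Longrightarrow> x = y"
  by (auto simp: is_basis_def orderly_independent_set_def orderly_dependent_def)

locale evs_space =
  fixes le :: "'x \<Rightarrow> 'x \<Rightarrow> bool" and add :: "'x \<Rightarrow> 'x \<Rightarrow> 'x"
    and smult :: "'k::field \<Rightarrow> 'x \<Rightarrow> 'x" and theta :: 'x
  assumes evs: "evs le add smult theta"
begin

lemma le_trans: "le x y \<Longrightarrow> le y z \<Longrightarrow> le x z"
  and add_mono: "le x y \<Longrightarrow> le (add x z) (add y z)"
  and smult_mono: "le x y \<Longrightarrow> le (smult \<alpha> x) (smult \<alpha> y)"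
  and smult_add_distrib: "smult \<alpha> (add x y) = add (smult \<alpha> x) (smult \<alpha> y)"
  and smult_smult: "smult \<alpha> (smult \<beta> x) = smult (\<alpha> * \<beta>) x"
  and smult_theta: "smult \<alpha> theta = theta"
  and add_neg_eq_theta_iff: "add x (smult (-1) x) = theta \<longleftrightarrow> x \<in> primitive le"
  using evs unfolding evs_def by (elim conjE; metis)+

sublocale add: comm_monoid add theta
  using evs unfolding evs_def by unfold_locales (elim conjE; metis)+

lemma primitive_smult:
  assumes "p \<in> primitive le"
  shows "smult \<beta> p \<in> primitive le"
proof -
  have "add (smult \<beta> p) (smult (-1) (smult \<beta> p))
      = smult \<beta> (add p (smult (-1) p))"
    by (simp add: smult_add_distrib smult_smult mult.commute)
  also have "\<dots> = theta"
    using assms by (simp add: add_neg_eq_theta_iff[THEN iffD2] smult_theta)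
  finally show ?thesis
    by (simp add: add_neg_eq_theta_iff)
qed

lemma primitive_add:
  assumes "p \<in> primitive le" and "q \<in> primitive le"
  shows "add p q \<in> primitive le"
proof -
  have "add (add p q) (smult (-1) (add p q))
      = add (add p (smult (-1) p)) (add q (smult (-1) q))"
    by (simp add: smult_add_distrib add.assoc add.left_commute)
  also have "\<dots> = theta"
    using assms by (simp add: add_neg_eq_theta_iff[THEN iffD2])
  finally show ?thesis
    by (simp add: add_neg_eq_theta_iff)
qed

lemma Lset_trans:
  assumes "y \<in> Lset le add smult x" and "z \<in> Lset le add smult y"
  shows "z \<in> Lset le add smult x"
proof -
  obtain \<alpha> p where \<alpha>: "\<alpha> \<noteq> 0" "p \<in> primitive le" "le (add (smult \<alpha> x) p) y"
    using assms(1) unfolding Lset_def by blast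
  obtain \<beta> q where \<beta>: "\<beta> \<noteq> 0" "q \<in> primitive le" "le (add (smult \<beta> y) q) z"
    using assms(2) unfolding Lset_def by blast
  have "le (add (smult \<beta> (add (smult \<alpha> x) p)) q) (add (smult \<beta> y) q)"
    using \<alpha>(3) by (intro add_mono smult_mono)
  then have "le (add (smult (\<beta> * \<alpha>) x) (add (smult \<beta> p) q)) z"
    using \<beta>(3) by (auto simp: smult_add_distrib smult_smult add.assoc intro: le_trans)
  moreover have "add (smult \<beta> p) q \<in> primitive le"
    using \<alpha>(2) \<beta>(2) by (intro primitive_add primitive_smult)
  moreover have "\<beta> * \<alpha> \<noteq> 0"
    using \<alpha>(1) \<beta>(1) by simp
  ultimately show ?thesis
    unfolding Lset_def by blast
qed

lemma basis_lepoll: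
  assumes "is_basis le add smult A" and "is_basis le add smult B"
  shows "A \<lesssim> B"
  using Lset_trans is_basis_covers[OF assms(2) is_basis_not_primitive[OF assms(1)]]
    is_basis_covers[OF assms(1) is_basis_not_primitive[OF assms(2)]]
    is_basis_Lset_imp_eq[OF assms(1)]
  by (rule antichain_lepoll_if_mutually_cofinal)

end

theorem mainTheorem3:
  fixes le :: "'x \<Rightarrow> 'x \<Rightarrow> bool" and add :: "'x \<Rightarrow> 'x \<Rightarrow> 'x"
    and smult :: "'k::field \<Rightarrow> 'x \<Rightarrow> 'x" and theta :: 'x
    and A B :: "'x set"
  assumes "evs le add smult theta"
    and "is_basis le add smult A"
    and "is_basis le add smult B"
  shows "A \<approx> B"
proof -
  interpret evs_space le add smult theta
    using assms(1) by unfold_locales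
  show ?thesis
    using basis_lepoll[OF assms(2,3)] basis_lepoll[OF assms(3,2)] by (rule lepoll_antisym)
qed

end
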